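(* Let $n\ge1$, $D\ge1$, and let $X_n=\{\mathbf{x}^0,\ldots,\mathbf{x}^{n-1}\}\subseteq\{0,1\}^D$ consist of $n$ pairwise distinct vectors, indexed so that $\mathbf{a}\cdot\mathbf{x}^0<\cdots<\mathbf{a}\cdot\mathbf{x}^{n-1}$ for some $\mathbf{a}\in\mathbb{Z}^D$. Then there is a five-layer Boolean threshold network with layer sizes $D$, $n$, $\lceil\log_2 n\rceil$, $n$, $D$ that is a perfect autoencoder for $X_n$, with the third layer (of size $\lceil\log_2 n\rceil$) as middle layer.
   Context: A Boolean threshold function is a map $\{0,1\}^h\to\{0,1\}$, $\mathbf{u}\mapsto[\mathbf{w}\cdot\mathbf{u}\ge\theta]$ (value $1$ iff $\mathbf{w}\cdot\mathbf{u}\ge\theta$) with $\mathbf{w}\in\mathbb{Z}^h,\theta\in\mathbb{Z}$. An $L$-layer Boolean threshold network has layers $1,\ldots,L$; layer $1$ is the input; each node of layer $t+1$ computes a Boolean threshold function of the values of layer $t$. If layer $k$ is designated the middle layer, the encoder $\mathbf{f}$ is the map from layer $1$ values to layer $k$ values and the decoder $\mathbf{g}$ the map from layer $k$ values to layer $L$ values; the network is a perfect autoencoder for $X_n$ if $\mathbf{g}(\mathbf{f}(\mathbf{x}^i))=\mathbf{x}^i$ for all $i$. *)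

theory Defs
  imports Complex_Main
begin

text \<open>Boolean vectors in {0,1}^h are represented as bool lists of length h
  (True = 1, False = 0).\<close>

definition bval :: "bool \<Rightarrow> int" where
  "bval b = (if b then 1 else 0)"

definition dotb :: "int list \<Rightarrow> bool list \<Rightarrow> int" where
  "dotb w u = (\<Sum>i<length u. w ! i * bval (u ! i))"

type_synonym node = "int list \<times> int"

definition eval_node :: "node \<Rightarrow> bool list \<Rightarrow> bool" where
  "eval_node nd u = (dotb (fst nd) u \<ge> snd nd)"

definition eval_layer :: "node list \<Rightarrow> bool list \<Rightarrow> bool list" where
  "eval_layer ly u = map (\<lambda>nd. eval_node nd u) ly"

fun eval_net :: "node list list \<Rightarrow> bool list \<Rightarrow> bool list" where
  "eval_net [] u = u"
| "eval_net (ly # lys) u = eval_net lys (eval_layer ly u)"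

definition threshold_network :: "nat list \<Rightarrow> node list list \<Rightarrow> bool" where
  "threshold_network s net \<longleftrightarrow> length s \<ge> 1 \<and> length net = length s - 1 \<and>
     (\<forall>t < length net. length (net ! t) = s ! (t + 1) \<and>
        (\<forall>nd \<in> set (net ! t). length (fst nd) = s ! t))"

text \<open>Encoder / decoder when layer k (1-based) is the middle layer.\<close>
definition encoder :: "node list list \<Rightarrow> nat \<Rightarrow> bool list \<Rightarrow> bool list" where
  "encoder net k = eval_net (take (k - 1) net)"

definition decoder :: "node list list \<Rightarrow> nat \<Rightarrow> bool list \<Rightarrow> bool list" where
  "decoder net k = eval_net (drop (k - 1) net)"

definition perfect_autoencoder ::
  "node list list \<Rightarrow> nat \<Rightarrow> (nat \<Rightarrow> bool list) \<Rightarrow> nat \<Rightarrow> bool" where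
  "perfect_autoencoder net k x n \<longleftrightarrow>
     (\<forall>i < n. decoder net k (encoder net k (x i)) = x i)"

end

theory Submission
  imports Defs
begin

text \<open>Sorting the points along \<open>a\<close> identifies \<open>x\<^sup>i\<close> with its rank \<open>i\<close>. The first hidden
  layer writes \<open>i\<close> in thermometer code (node \<open>j\<close> fires iff \<open>a \<cdot> x\<^sup>j \<le> a \<cdot> x\<^sup>i\<close>, i.e. iff
  \<open>j \<le> i\<close>); the middle layer turns this into the binary expansion of \<open>i\<close>, bit \<open>b\<close> being the
  telescoping sum of the increments of bit \<open>b\<close> along \<open>0, \<dots>, i\<close>; the fourth layer recovers the
  one-hot code of \<open>i\<close>, node \<open>j\<close> firing iff the bits of \<open>i\<close> match those of \<open>j\<close>; and the output
  layer reads \<open>x\<^sup>i\<close> off a lookup table.\<close>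

definition thermometer_code :: "nat \<Rightarrow> nat \<Rightarrow> bool list" where
  "thermometer_code n i = map (\<lambda>j. j \<le> i) [0..<n]"

definition binary_code :: "nat \<Rightarrow> nat \<Rightarrow> bool list" where
  "binary_code m i = map (bit i) [0..<m]"

definition one_hot_code :: "nat \<Rightarrow> nat \<Rightarrow> bool list" where
  "one_hot_code n i = map (\<lambda>j. j = i) [0..<n]"

lemma dotb_map_upt: "dotb (map w [0..<k]) (map u [0..<k]) = (\<Sum>j<k. w j * bval (u j))"
  unfolding dotb_def by (auto intro: sum.cong)

lemma eval_layer_map_upt:
  "eval_layer (map nd [0..<k]) u = map (\<lambda>j. eval_node (nd j) u) [0..<k]"
  unfolding eval_layer_def by simp

definition rank_layer :: "int list \<Rightarrow> (nat \<Rightarrow> bool list) \<Rightarrow> nat \<Rightarrow> node list" where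
  "rank_layer a x n = map (\<lambda>j. (a, dotb a (x j))) [0..<n]"

lemma eval_rank_layer:
  assumes "strict_mono_on {..<n} (\<lambda>i. dotb a (x i))" and "i < n"
  shows "eval_layer (rank_layer a x n) (x i) = thermometer_code n i"
proof -
  have "dotb a (x i) \<ge> dotb a (x j) \<longleftrightarrow> j \<le> i" if "j < n" for j
    using strict_mono_on_less_eq[OF assms(1), of j i] that assms(2) by simp
  then show ?thesis
    by (simp add: rank_layer_def thermometer_code_def eval_layer_map_upt eval_node_def)
qed

definition bit_step :: "nat \<Rightarrow> nat \<Rightarrow> int" where
  "bit_step b j = bval (bit j b) - (if j = 0 then 0 else bval (bit (j - 1) b))"

lemma sum_bit_step: "(\<Sum>j\<le>i. bit_step b j) = bval (bit i b)"
  by (induction i) (auto simp: bit_step_def)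

definition binary_layer :: "nat \<Rightarrow> nat \<Rightarrow> node list" where
  "binary_layer n m = map (\<lambda>b. (map (bit_step b) [0..<n], 1)) [0..<m]"

lemma eval_binary_layer:
  assumes "i < n"
  shows "eval_layer (binary_layer n m) (thermometer_code n i) = binary_code m i"
proof -
  have "(\<Sum>j<n. bit_step b j * bval (j \<le> i)) = bval (bit i b)" for b
  proof -
    have "(\<Sum>j<n. bit_step b j * bval (j \<le> i)) = (\<Sum>j\<le>i. bit_step b j)"
      using assms by (intro sum.mono_neutral_cong_right) (auto simp: bval_def)
    then show ?thesis
      by (simp add: sum_bit_step)
  qed
  then show ?thesis
    by (simp add: binary_layer_def thermometer_code_def binary_code_def eval_layer_map_upt
        eval_node_def dotb_map_upt) (simp add: bval_def)
qed

definition bit_match_weight :: "nat \<Rightarrow> nat \<Rightarrow> int" where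
  "bit_match_weight j b = (if bit j b then 1 else -1)"

lemma bit_match_weight_le: "bit_match_weight j b * bval (bit i b) \<le> bval (bit j b)"
  by (auto simp: bit_match_weight_def bval_def)

lemma bit_match_weight_eq_iff:
  "bit_match_weight j b * bval (bit i b) = bval (bit j b) \<longleftrightarrow> bit i b = bit j b"
  by (auto simp: bit_match_weight_def bval_def)

lemma bit_match_ge_iff:
  fixes i j :: nat
  assumes "i < 2 ^ m" and "j < 2 ^ m"
  shows "(\<Sum>b<m. bval (bit j b)) \<le> (\<Sum>b<m. bit_match_weight j b * bval (bit i b))
    \<longleftrightarrow> i = j"
proof
  assume ge: "(\<Sum>b<m. bval (bit j b)) \<le> (\<Sum>b<m. bit_match_weight j b * bval (bit i b))"
  have "bit i b = bit j b" if "b < m" for b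
  proof (rule ccontr)
    assume "bit i b \<noteq> bit j b"
    then have "bit_match_weight j b * bval (bit i b) < bval (bit j b)"
      using bit_match_weight_le[of j b i] bit_match_weight_eq_iff[of j b i] by simp
    then have "(\<Sum>b<m. bit_match_weight j b * bval (bit i b)) < (\<Sum>b<m. bval (bit j b))"
      using \<open>b < m\<close> bit_match_weight_le by (intro sum_strict_mono_ex1) auto
    with ge show False
      by simp
  qed
  then have "take_bit m i = take_bit m j"
    by (auto simp: bit_eq_iff bit_take_bit_iff)
  with assms show "i = j"
    by (simp add: take_bit_nat_eq_self)
next
  assume "i = j"
  then show "(\<Sum>b<m. bval (bit j b)) \<le> (\<Sum>b<m. bit_match_weight j b * bval (bit i b))"
    by (intro sum_mono) (simp add: bit_match_weight_def bval_def)
qed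

definition one_hot_layer :: "nat \<Rightarrow> nat \<Rightarrow> node list" where
  "one_hot_layer n m =
     map (\<lambda>j. (map (bit_match_weight j) [0..<m], \<Sum>b<m. bval (bit j b))) [0..<n]"

lemma eval_one_hot_layer:
  assumes "n \<le> 2 ^ m" and "i < n"
  shows "eval_layer (one_hot_layer n m) (binary_code m i) = one_hot_code n i"
  using assms bit_match_ge_iff[of i m]
  by (auto simp: one_hot_layer_def binary_code_def one_hot_code_def eval_layer_map_upt
      eval_node_def dotb_map_upt)

definition lookup_layer :: "nat \<Rightarrow> (nat \<Rightarrow> bool list) \<Rightarrow> nat \<Rightarrow> node list" where
  "lookup_layer D x n = map (\<lambda>d. (map (\<lambda>j. bval (x j ! d)) [0..<n], 1)) [0..<D]"

lemma eval_lookup_layer: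
  assumes "i < n" and "length (x i) = D"
  shows "eval_layer (lookup_layer D x n) (one_hot_code n i) = x i"
proof -
  have "(\<Sum>j<n. bval (x j ! d) * bval (j = i)) = bval (x i ! d)" for d
    using assms(1) by (simp add: bval_def if_distrib[of "(*) _"] sum.delta cong: if_cong)
  then have "eval_layer (lookup_layer D x n) (one_hot_code n i) = map (\<lambda>d. x i ! d) [0..<D]"
    by (simp add: lookup_layer_def one_hot_code_def eval_layer_map_upt eval_node_def
        dotb_map_upt) (simp add: bval_def)
  also have "\<dots> = x i"
    using assms(2) by (intro nth_equalityI) auto
  finally show ?thesis .
qed

definition autoencoder_net ::
  "int list \<Rightarrow> (nat \<Rightarrow> bool list) \<Rightarrow> nat \<Rightarrow> nat \<Rightarrow> nat \<Rightarrow> node list list" where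
  "autoencoder_net a x n m D =
     [rank_layer a x n, binary_layer n m, one_hot_layer n m, lookup_layer D x n]"

lemma threshold_network_autoencoder_net:
  assumes "length a = D"
  shows "threshold_network [D, n, m, n, D] (autoencoder_net a x n m D)"
  using assms
  by (auto simp: threshold_network_def autoencoder_net_def rank_layer_def binary_layer_def
      one_hot_layer_def lookup_layer_def less_Suc_eq nth_Cons')

lemma perfect_autoencoder_autoencoder_net:
  assumes "strict_mono_on {..<n} (\<lambda>i. dotb a (x i))" and "n \<le> 2 ^ m"
    and "\<forall>i < n. length (x i) = D"
  shows "perfect_autoencoder (autoencoder_net a x n m D) 3 x n"
  using assms
  by (simp add: perfect_autoencoder_def encoder_def decoder_def autoencoder_net_def
      eval_rank_layer eval_binary_layer eval_one_hot_layer eval_lookup_layer)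

lemma le_two_power_ceiling_log2: "n \<le> 2 ^ nat \<lceil>log 2 (real n)\<rceil>"
proof (cases "n = 0")
  case False
  define m where "m = nat \<lceil>log 2 (real n)\<rceil>"
  have "log 2 (real n) \<le> real m"
    unfolding m_def by linarith
  with False have "real n \<le> 2 powr real m"
    by (simp add: log_le_iff)
  then show ?thesis
    unfolding m_def[symmetric] by (simp add: powr_realpow)
qed simp

theorem theorem21:
  fixes n D :: nat and x :: "nat \<Rightarrow> bool list" and a :: "int list"
  assumes "n \<ge> 1" and "D \<ge> 1"
    and "\<forall>i < n. length (x i) = D"
    and "inj_on x {..<n}"
    and "length a = D"
    and "\<forall>i j. i < j \<and> j < n \<longrightarrow> dotb a (x i) < dotb a (x j)"
  shows "\<exists>net. threshold_network [D, n, nat \<lceil>log 2 (real n)\<rceil>, n, D] net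
           \<and> perfect_autoencoder net 3 x n"
proof -
  have "strict_mono_on {..<n} (\<lambda>i. dotb a (x i))"
    using assms(6) by (intro strict_mono_onI) auto
  then show ?thesis
    using assms(3,5) threshold_network_autoencoder_net perfect_autoencoder_autoencoder_net
      le_two_power_ceiling_log2 by blast
qed

end
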